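(* Consider the problem $\min_{x\in\mathbb{R}^n} f(x):=F(x)+h(x)$, where $h:\mathbb{R}^n\to\mathbb{R}\cup\{+\infty\}$ is a proper closed convex function, $F:\mathbb{R}^n\to\mathbb{R}$ is lower semicontinuous (possibly nonconvex), $\mathrm{dom}\, f=\mathrm{dom}\, h$, and there is $f_\infty>-\infty$ with $f(x)\ge f_\infty$ for all $x\in\mathrm{dom}\, f$. Fix $q\in[0,2)$, $\rho>0$, $L>0$, $\delta\ge0$ and $\beta,\zeta\in[0,1)$, and set for all $k\ge0$ $$\delta_k=\frac{\delta}{(k+1)^{\frac{\beta(2-q)}{2}}},\qquad \alpha_k=\frac{1}{(L+q\rho)(k+1)^{\zeta}}.$$ Let $x_0\in\mathrm{dom}\, h$ and let $(x_k)_{k\ge0}$ be generated by $x_{k+1}=\mathrm{prox}_{\alpha_k h}(x_k-\alpha_k g_k)$, where $\mathrm{prox}_{\gamma h}(z):=\arg\min_{y\in\mathrm{dom}\, h}\{h(y)+\tfrac{1}{2\gamma}\|z-y\|^2\}$ and at each iteration $k$ the vector $g_k$ satisfies $$F(x)-\big(F(x_k)+\langle g_k,x-x_k\rangle\big)\le \frac{L}{2}\|x-x_k\|^2+\delta_k\|x-x_k\|^q\quad\text{for all } x\in\mathrm{dom}\, f.$$ Let $p_{j+1}:=-\frac{1}{\alpha_j}(x_{j+1}-x_j)-g_j\in\partial h(x_{j+1})$. Then for all $k\ge0$, $$\min_{j=0,\dots,k}\|g_j+p_{j+1}\|^2\le \frac{2(L+q\rho)(f(x_0)-f_\infty)}{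(1-\zeta)(k+1)^{1-\zeta}}+\frac{(2-q)(L+q\rho)\,\delta^{\frac{2}{2-q}}}{(1-\zeta)(1-\beta)\,\rho^{\frac{q}{2-q}}\,(k+1)^{\beta-\zeta}}.$$
   Context: $\|\cdot\|$ is the Euclidean norm and $\partial h$ the convex subdifferential of $h$. The condition on $g_k$ is the paper's "inexact first-order $(\delta_k,L)$-oracle of degree $q$" at $x_k$. *)

theory Defs
  imports "HOL-Analysis.Analysis"
begin

definition edom :: "('a \<Rightarrow> ereal) \<Rightarrow> 'a set" where
  "edom h = {x. h x < \<infinity>}"

definition proper_fun :: "('a \<Rightarrow> ereal) \<Rightarrow> bool" where
  "proper_fun h \<longleftrightarrow> (\<forall>x. h x \<noteq> -\<infinity>) \<and> (\<exists>x. h x < \<infinity>)"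

definition closed_fun :: "('a::real_normed_vector \<Rightarrow> ereal) \<Rightarrow> bool" where
  "closed_fun h \<longleftrightarrow> closed {(x, t::real). h x \<le> ereal t}"

definition convex_efun :: "('a::real_vector \<Rightarrow> ereal) \<Rightarrow> bool" where
  "convex_efun h \<longleftrightarrow> (\<forall>x y t. 0 \<le> t \<and> t \<le> 1 \<longrightarrow>
      h ((1 - t) *\<^sub>R x + t *\<^sub>R y) \<le> ereal (1 - t) * h x + ereal t * h y)"

definition lsc_fun :: "('a::topological_space \<Rightarrow> real) \<Rightarrow> bool" where
  "lsc_fun F \<longleftrightarrow> (\<forall>t. closed {x. F x \<le> t})"

definition prox_set :: "real \<Rightarrow> ('a::real_normed_vector \<Rightarrow> ereal) \<Rightarrow> 'a \<Rightarrow> 'a set" where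
  "prox_set \<gamma> h z = {y \<in> edom h. \<forall>w \<in> edom h.
      h y + ereal (norm (z - y)^2 / (2 * \<gamma>)) \<le> h w + ereal (norm (z - w)^2 / (2 * \<gamma>))}"

end

theory Submission
  imports Defs
begin

text \<open>
  The proximal point y of a step from x is compared with the points y + t (x - y) of the
  segment back to x; letting t tend to 0 gives h(y) <= h(x) - |y - x|^2 / alpha - <g, y - x>.
  Together with the inexact first-order bound on F, after absorbing delta_k |y - x|^q into the
  quadratic term by Young's inequality with weights q/2 and 1 - q/2 (this is where rho enters),
  this is the sufficient decrease f(x_(k+1)) <= f(x_k) - |x_(k+1) - x_k|^2 / (2 alpha_k) + C / (k+1)^beta;
  the exponent in delta_k is chosen so that delta_k^(2/(2-q)) decays like (k+1)^(-beta).
  As g_j + p_(j+1) = (x_j - x_(j+1)) / alpha_j, telescoping bounds the alpha-weighted sum of the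
  squared norms, whose minimum is at most their weighted average; the sums of (j+1)^(-beta) and
  (j+1)^(-zeta) are compared with (k+1)^(1-beta) / (1-beta) and (k+1)^(1-zeta).
\<close>

lemma mult_powr_le_Young_quadratic:
  fixes d t r q :: real
  assumes "0 \<le> d" "0 \<le> t" "0 < r" "0 \<le> q" "q < 2"
  shows "d * t powr q \<le> q * r / 2 * t\<^sup>2 + (2 - q) / 2 * d powr (2 / (2 - q)) / r powr (q / (2 - q))"
proof (cases "d = 0 \<or> t = 0")
  case True
  then show ?thesis using assms by auto
next
  case False
  with assms have "0 < d" "0 < t" by auto
  define a where "a = r * t\<^sup>2"
  define b where "b = d powr (2 / (2 - q)) / r powr (q / (2 - q))"
  have Young: "a powr (q / 2) * b powr (1 - q / 2) \<le> q / 2 * a + (1 - q / 2) * b"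
    using assms \<open>0 < d\<close> \<open>0 < t\<close> by (intro Youngs_inequality_0) (auto simp: a_def b_def)
  have "a powr (q / 2) = r powr (q / 2) * t powr q"
    using assms \<open>0 < t\<close> by (simp add: a_def powr_mult powr_powr flip: powr_numeral)
  moreover have "b powr (1 - q / 2) = d / r powr (q / 2)"
  proof -
    have "1 - q / 2 = (2 - q) / 2" by simp
    moreover have "2 / (2 - q) * ((2 - q) / 2) = 1" "q / (2 - q) * ((2 - q) / 2) = q / 2"
      using assms by (simp_all add: field_simps)
    ultimately show ?thesis
      using \<open>0 < d\<close> by (simp only: b_def powr_divide powr_ge_zero powr_powr) simp
  qed
  ultimately have "a powr (q / 2) * b powr (1 - q / 2) = d * t powr q"
    using assms by simp
  moreover have "q / 2 * a + (1 - q / 2) * b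
      = q * r / 2 * t\<^sup>2 + (2 - q) / 2 * d powr (2 / (2 - q)) / r powr (q / (2 - q))"
    by (simp add: a_def b_def field_simps)
  ultimately show ?thesis
    using Young by linarith
qed

lemma powr_concave_tangent:
  fixes s a b :: real
  assumes "0 \<le> s" "s \<le> 1" "0 < a" "0 < b"
  shows "s * a powr (s - 1) * (a - b) \<le> a powr s - b powr s"
proof -
  have "(b / a) powr s * 1 powr (1 - s) \<le> s * (b / a) + (1 - s) * 1"
    using assms by (intro Youngs_inequality_0) auto
  then have "b powr s \<le> a powr s * (s * (b / a) + (1 - s))"
    using assms by (simp add: powr_divide divide_le_eq mult.commute)
  also have "\<dots> = a powr s - s * a powr (s - 1) * (a - b)"
    using assms by (simp add: powr_diff field_simps)
  finally show ?thesis by simp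
qed

lemma sum_inverse_powr_le:
  fixes \<beta> :: real
  assumes "0 \<le> \<beta>" "\<beta> < 1"
  shows "(\<Sum>j\<le>k. 1 / (real j + 1) powr \<beta>) \<le> (real k + 1) powr (1 - \<beta>) / (1 - \<beta>)"
proof (induction k)
  case 0
  then show ?case using assms by simp
next
  case (Suc k)
  have "(1 - \<beta>) * (real k + 2) powr (1 - \<beta> - 1) * ((real k + 2) - (real k + 1))
      \<le> (real k + 2) powr (1 - \<beta>) - (real k + 1) powr (1 - \<beta>)"
    using assms by (intro powr_concave_tangent) auto
  moreover have "(real k + 2) powr (1 - \<beta> - 1) = 1 / (real k + 2) powr \<beta>"
    by (simp add: powr_minus divide_inverse)
  ultimately have "1 / (real k + 2) powr \<beta>
      \<le> ((real k + 2) powr (1 - \<beta>) - (real k + 1) powr (1 - \<beta>)) / (1 - \<beta>)"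
    using assms by (simp add: le_divide_eq mult.commute)
  with Suc show ?case
    by (simp add: add.commute diff_divide_distrib)
qed

lemma sum_inverse_powr_ge:
  fixes \<zeta> :: real
  assumes "0 \<le> \<zeta>"
  shows "(real k + 1) powr (1 - \<zeta>) \<le> (\<Sum>j\<le>k. 1 / (real j + 1) powr \<zeta>)"
proof -
  have "(real k + 1) powr (1 - \<zeta>) = (\<Sum>j\<le>k. 1 / (real k + 1) powr \<zeta>)"
    by (simp add: powr_diff)
  also have "\<dots> \<le> (\<Sum>j\<le>k. 1 / (real j + 1) powr \<zeta>)"
    using assms by (intro sum_mono divide_left_mono powr_mono2) auto
  finally show ?thesis .
qed

lemma le_if_forall_le_add_scaled:
  fixes a b D :: real
  assumes "\<And>t. 0 < t \<Longrightarrow> t \<le> 1 \<Longrightarrow> a \<le> b + t * D"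
  shows "a \<le> b"
proof (rule field_le_epsilon)
  fix e :: real assume "0 < e"
  define t where "t = min 1 (e / (\<bar>D\<bar> + 1))"
  have "0 < t" "t \<le> 1" using \<open>0 < e\<close> by (auto simp: t_def)
  have "t * D \<le> t * \<bar>D\<bar>"
    using \<open>0 < t\<close> by (simp add: mult_left_mono)
  also have "\<dots> \<le> e / (\<bar>D\<bar> + 1) * \<bar>D\<bar>"
    by (intro mult_right_mono) (auto simp: t_def)
  also have "\<dots> \<le> e"
    using \<open>0 < e\<close> by (simp add: field_simps)
  finally show "a \<le> b + e"
    using assms[OF \<open>0 < t\<close> \<open>t \<le> 1\<close>] by linarith
qed

lemma power2_norm_diff_scaleR:
  fixes u v :: "'a::real_inner"
  shows "norm (u - t *\<^sub>R v)^2 = norm u^2 - 2 * t * (u \<bullet> v) + t\<^sup>2 * norm v^2"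
  unfolding power2_norm_eq_inner
  by (simp add: inner_diff_left inner_diff_right inner_commute power2_eq_square algebra_simps)

lemma proper_fun_edom_eq_ereal:
  assumes "proper_fun h" "x \<in> edom h"
  shows "h x = ereal (real_of_ereal (h x))"
  using assms unfolding proper_fun_def edom_def by (cases "h x") auto

lemma prox_set_descent:
  fixes h :: "'a::real_inner \<Rightarrow> ereal"
  assumes convex: "convex_efun h" and proper: "proper_fun h"
    and x: "x \<in> edom h" and \<alpha>: "0 < \<alpha>" and y: "y \<in> prox_set \<alpha> h (x - \<alpha> *\<^sub>R g)"
  shows "real_of_ereal (h y) \<le> real_of_ereal (h x) - norm (y - x)^2 / \<alpha> - g \<bullet> (y - x)"
proof -
  define z where "z = x - \<alpha> *\<^sub>R g"
  define D where "D = norm (y - x)^2"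
  define c where "c = g \<bullet> (y - x)"
  define Hx Hy where "Hx = real_of_ereal (h x)" and "Hy = real_of_ereal (h y)"
  have "y \<in> edom h"
    and y_min: "\<And>w. w \<in> edom h \<Longrightarrow>
      h y + ereal (norm (z - y)^2 / (2 * \<alpha>)) \<le> h w + ereal (norm (z - w)^2 / (2 * \<alpha>))"
    using y unfolding prox_set_def z_def by auto
  have hx: "h x = ereal Hx" and hy: "h y = ereal Hy"
    unfolding Hx_def Hy_def using proper x \<open>y \<in> edom h\<close> by (auto intro: proper_fun_edom_eq_ereal)
  have inner_zy: "(z - y) \<bullet> (x - y) = D + \<alpha> * c"
    unfolding z_def D_def c_def power2_norm_eq_inner
    by (simp add: inner_diff_left inner_diff_right inner_commute algebra_simps)
  have "Hy \<le> Hx - D / \<alpha> - c + t * (D / (2 * \<alpha>))" if t: "0 < t" "t \<le> 1" for t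
  proof -
    define w where "w = y + t *\<^sub>R (x - y)"
    have "h w \<le> ereal (1 - t) * h y + ereal t * h x"
      using convex t unfolding convex_efun_def w_def by (simp add: algebra_simps)
    then have hw: "h w \<le> ereal ((1 - t) * Hy + t * Hx)"
      by (simp add: hx hy)
    then have "w \<in> edom h"
      unfolding edom_def using order.strict_trans1 by fastforce
    with y_min have "h y + ereal (norm (z - y)^2 / (2 * \<alpha>)) \<le> h w + ereal (norm (z - w)^2 / (2 * \<alpha>))" .
    also have "\<dots> \<le> ereal ((1 - t) * Hy + t * Hx + norm (z - w)^2 / (2 * \<alpha>))"
      using add_right_mono[OF hw] by (simp flip: plus_ereal.simps)
    finally have min_w: "Hy + norm (z - y)^2 / (2 * \<alpha>) \<le> (1 - t) * Hy + t * Hx + norm (z - w)^2 / (2 * \<alpha>)"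
      by (simp add: hy)
    have "z - w = (z - y) - t *\<^sub>R (x - y)"
      by (simp add: w_def algebra_simps)
    then have "norm (z - w)^2 = norm (z - y)^2 - 2 * t * ((z - y) \<bullet> (x - y)) + t\<^sup>2 * norm (x - y)^2"
      by (simp only: power2_norm_diff_scaleR)
    also have "\<dots> = norm (z - y)^2 - 2 * t * (D + \<alpha> * c) + t\<^sup>2 * D"
      by (simp add: inner_zy D_def norm_minus_commute)
    finally have "norm (z - w)^2 / (2 * \<alpha>)
        = norm (z - y)^2 / (2 * \<alpha>) - t * (D / \<alpha> + c) + t * (t * (D / (2 * \<alpha>)))"
      using \<alpha> by (simp add: field_simps power2_eq_square)
    with min_w have "t * Hy \<le> t * (Hx - D / \<alpha> - c + t * (D / (2 * \<alpha>)))"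
      by (simp add: algebra_simps)
    then show ?thesis
      using t by simp
  qed
  then have "Hy \<le> Hx - D / \<alpha> - c"
    by (rule le_if_forall_le_add_scaled)
  then show ?thesis
    unfolding Hx_def Hy_def D_def c_def .
qed

lemma inexact_prox_grad_descent:
  fixes h :: "'a::real_inner \<Rightarrow> ereal" and F :: "'a \<Rightarrow> real"
  assumes convex: "convex_efun h" and proper: "proper_fun h"
    and x: "x \<in> edom h" and \<alpha>: "0 < \<alpha>" "\<alpha> * (L + q * \<rho>) \<le> 1"
    and y: "y \<in> prox_set \<alpha> h (x - \<alpha> *\<^sub>R g)"
    and model: "F y - (F x + g \<bullet> (y - x)) \<le> L / 2 * norm (y - x)^2 + \<delta> * norm (y - x) powr q"
    and \<delta>: "0 \<le> \<delta>" and \<rho>: "0 < \<rho>" and q: "0 \<le> q" "q < 2"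
  shows "F y + real_of_ereal (h y) \<le> F x + real_of_ereal (h x) - norm (y - x)^2 / (2 * \<alpha>)
           + (2 - q) / 2 * \<delta> powr (2 / (2 - q)) / \<rho> powr (q / (2 - q))"
proof -
  have "\<delta> * norm (y - x) powr q
      \<le> q * \<rho> / 2 * norm (y - x)^2 + (2 - q) / 2 * \<delta> powr (2 / (2 - q)) / \<rho> powr (q / (2 - q))"
    using \<delta> \<rho> q by (intro mult_powr_le_Young_quadratic) auto
  moreover have "\<alpha> * (L + q * \<rho>) * norm (y - x)^2 \<le> 1 * norm (y - x)^2"
    using \<alpha>(2) by (intro mult_right_mono) auto
  then have "(L + q * \<rho>) / 2 * norm (y - x)^2 \<le> norm (y - x)^2 / (2 * \<alpha>)"
    using \<alpha>(1) by (simp add: field_simps)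
  ultimately show ?thesis
    using prox_set_descent[OF convex proper x \<alpha>(1) y] model by (simp add: algebra_simps)
qed

lemma inexact_prox_grad_descent_powr_schedule:
  fixes h :: "'a::real_inner \<Rightarrow> ereal" and F :: "'a \<Rightarrow> real" and j :: nat
  assumes convex: "convex_efun h" and proper: "proper_fun h" and x: "x \<in> edom h"
    and \<alpha>: "\<alpha> = 1 / (K * (real j + 1) powr \<zeta>)" and K: "K = L + q * \<rho>" "0 < K" and \<zeta>: "0 \<le> \<zeta>"
    and y: "y \<in> prox_set \<alpha> h (x - \<alpha> *\<^sub>R g)"
    and model: "F y - (F x + g \<bullet> (y - x))
      \<le> L / 2 * norm (y - x)^2 + \<delta> / (real j + 1) powr (\<beta> * (2 - q) / 2) * norm (y - x) powr q"
    and \<delta>: "0 \<le> \<delta>" and \<rho>: "0 < \<rho>" and q: "0 \<le> q" "q < 2"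
  shows "F y + real_of_ereal (h y) \<le> F x + real_of_ereal (h x)
           - norm ((1 / \<alpha>) *\<^sub>R (y - x))^2 / (2 * K * (real j + 1) powr \<zeta>)
           + (2 - q) / 2 * \<delta> powr (2 / (2 - q)) / \<rho> powr (q / (2 - q)) / (real j + 1) powr \<beta>"
proof -
  have "1 \<le> (real j + 1) powr \<zeta>"
    using \<zeta> by (simp add: ge_one_powr_ge_zero)
  then have "0 < \<alpha>" "\<alpha> * (L + q * \<rho>) \<le> 1"
    using K by (simp_all add: \<alpha>)
  moreover have "norm ((1 / \<alpha>) *\<^sub>R (y - x))^2 / (2 * K * (real j + 1) powr \<zeta>) = norm (y - x)^2 / (2 * \<alpha>)"
    using \<open>0 < \<alpha>\<close> by (simp add: \<alpha> power2_eq_square)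
  moreover have "(\<delta> / (real j + 1) powr (\<beta> * (2 - q) / 2)) powr (2 / (2 - q))
      = \<delta> powr (2 / (2 - q)) / (real j + 1) powr \<beta>"
    using \<delta> q by (simp add: powr_divide powr_powr)
  ultimately show ?thesis
    using inexact_prox_grad_descent[OF convex proper x _ _ y model _ \<rho> q] \<delta> by (simp add: mult_ac)
qed

lemma Min_le_of_descent_powr_steps:
  fixes \<phi> G :: "nat \<Rightarrow> real"
  assumes descent: "\<And>j. \<phi> (Suc j) \<le> \<phi> j - G j / (2 * K * (real j + 1) powr \<zeta>) + C / (real j + 1) powr \<beta>"
    and lower: "\<And>j. \<phi>_inf \<le> \<phi> j" and G: "\<And>j. 0 \<le> G j"
    and K: "0 < K" and C: "0 \<le> C" and \<beta>: "0 \<le> \<beta>" "\<beta> < 1" and \<zeta>: "0 \<le> \<zeta>"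
  shows "Min (G ` {..k}) \<le> 2 * K * (\<phi> 0 - \<phi>_inf) / (real k + 1) powr (1 - \<zeta>)
           + 2 * K * C / ((1 - \<beta>) * (real k + 1) powr (\<beta> - \<zeta>))"
proof -
  define M where "M = Min (G ` {..k})"
  define w where "w j = 1 / (K * (real j + 1) powr \<zeta>)" for j
  have "0 \<le> M"
    using G Min_in[of "G ` {..k}"] by (auto simp: M_def)
  have "(\<Sum>j\<le>k. w j) = (\<Sum>j\<le>k. 1 / (real j + 1) powr \<zeta>) / K"
    by (simp add: w_def sum_divide_distrib mult.commute)
  then have "(real k + 1) powr (1 - \<zeta>) / K * M \<le> (\<Sum>j\<le>k. w j) * M"
    using sum_inverse_powr_ge[OF \<zeta>, of k] K \<open>0 \<le> M\<close> by (simp add: divide_right_mono mult_right_mono)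
  also have "\<dots> \<le> (\<Sum>j\<le>k. w j * G j)"
    unfolding sum_distrib_right M_def using K
    by (intro sum_mono mult_left_mono Min_le) (auto simp: w_def)
  also have "\<dots> \<le> (\<Sum>j\<le>k. 2 * (\<phi> j - \<phi> (Suc j)) + 2 * C * (1 / (real j + 1) powr \<beta>))"
    using descent K by (intro sum_mono) (simp add: w_def field_simps)
  also have "\<dots> = 2 * (\<phi> 0 - \<phi> (Suc k)) + 2 * C * (\<Sum>j\<le>k. 1 / (real j + 1) powr \<beta>)"
    by (simp only: sum.distrib flip: sum_distrib_left) (simp only: sum_telescope)
  also have "\<dots> \<le> 2 * (\<phi> 0 - \<phi>_inf) + 2 * C * ((real k + 1) powr (1 - \<beta>) / (1 - \<beta>))"
    using lower[of "Suc k"] sum_inverse_powr_le[OF \<beta>, of k] C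
    by (intro add_mono mult_left_mono) auto
  finally have "M \<le> K / (real k + 1) powr (1 - \<zeta>)
      * (2 * (\<phi> 0 - \<phi>_inf) + 2 * C * ((real k + 1) powr (1 - \<beta>) / (1 - \<beta>)))"
    using K by (simp add: field_simps)
  also have "\<dots> = 2 * K * (\<phi> 0 - \<phi>_inf) / (real k + 1) powr (1 - \<zeta>)
           + 2 * K * C / ((1 - \<beta>) * (real k + 1) powr (\<beta> - \<zeta>))"
    using \<beta> by (simp add: powr_diff field_simps)
  finally show ?thesis
    unfolding M_def .
qed

theorem theorem2:
  fixes F :: "'a::euclidean_space \<Rightarrow> real" and h :: "'a \<Rightarrow> ereal"
    and x g :: "nat \<Rightarrow> 'a"
    and f_inf q \<rho> L \<delta> \<beta> \<zeta> :: real
    and \<delta>k \<alpha> :: "nat \<Rightarrow> real" and k :: nat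
  assumes h_proper: "proper_fun h" and h_closed: "closed_fun h" and h_convex: "convex_efun h"
    and F_lsc: "lsc_fun F"
    and lower: "\<forall>y\<in>edom h. ereal (F y) + h y \<ge> ereal f_inf"
    and q: "0 \<le> q" "q < 2" and \<rho>: "\<rho> > 0" and L: "L > 0" and \<delta>: "\<delta> \<ge> 0"
    and \<beta>: "0 \<le> \<beta>" "\<beta> < 1" and \<zeta>: "0 \<le> \<zeta>" "\<zeta> < 1"
    and \<delta>k_def: "\<forall>j. \<delta>k j = \<delta> / (real j + 1) powr (\<beta> * (2 - q) / 2)"
    and \<alpha>_def: "\<forall>j. \<alpha> j = 1 / ((L + q * \<rho>) * (real j + 1) powr \<zeta>)"
    and x0: "x 0 \<in> edom h"
    and step: "\<forall>j. x (Suc j) \<in> prox_set (\<alpha> j) h (x j - \<alpha> j *\<^sub>R g j)"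
    and inexact_orc: "\<forall>j. \<forall>y\<in>edom h. F y - (F (x j) + g j \<bullet> (y - x j))
                   \<le> L / 2 * norm (y - x j)^2 + \<delta>k j * norm (y - x j) powr q"
  shows "(let p = (\<lambda>j. - (1 / \<alpha> (j - 1)) *\<^sub>R (x j - x (j - 1)) - g (j - 1)) in
          Min ((\<lambda>j. norm (g j + p (Suc j))^2) ` {..k}))
         \<le> 2 * (L + q * \<rho>) * (F (x 0) + real_of_ereal (h (x 0)) - f_inf)
              / ((1 - \<zeta>) * (real k + 1) powr (1 - \<zeta>))
           + (2 - q) * (L + q * \<rho>) * \<delta> powr (2 / (2 - q))
              / ((1 - \<zeta>) * (1 - \<beta>) * \<rho> powr (q / (2 - q)) * (real k + 1) powr (\<beta> - \<zeta>))"
proof -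
  define K where "K = L + q * \<rho>"
  define C where "C = (2 - q) / 2 * \<delta> powr (2 / (2 - q)) / \<rho> powr (q / (2 - q))"
  define f where "f j = F (x j) + real_of_ereal (h (x j))" for j
  define G where "G j = norm (g j + (- (1 / \<alpha> j) *\<^sub>R (x (Suc j) - x j) - g j))^2" for j
  have K: "0 < K"
    using L q \<rho> by (simp add: K_def add_pos_nonneg)
  have x_edom: "x j \<in> edom h" for j
    using x0 step unfolding prox_set_def by (cases j) auto
  have "f (Suc j) \<le> f j - G j / (2 * K * (real j + 1) powr \<zeta>) + C / (real j + 1) powr \<beta>" for j
    using inexact_prox_grad_descent_powr_schedule[OF h_convex h_proper x_edom _ K_def K \<zeta>(1)
        step[rule_format] inexact_orc[rule_format, OF x_edom, unfolded \<delta>k_def[rule_format]] \<delta> \<rho> q]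
      \<alpha>_def
    by (simp add: f_def G_def C_def K_def)
  moreover have f_lower: "f_inf \<le> f j" for j
    using lower x_edom proper_fun_edom_eq_ereal[OF h_proper x_edom] unfolding f_def
    by (metis ereal_less_eq(3) plus_ereal.simps(1))
  ultimately have "Min (G ` {..k}) \<le> 2 * K * (f 0 - f_inf) / (real k + 1) powr (1 - \<zeta>)
      + 2 * K * C / ((1 - \<beta>) * (real k + 1) powr (\<beta> - \<zeta>))" (is "_ \<le> ?R")
    using K \<delta> q \<beta> \<zeta> by (intro Min_le_of_descent_powr_steps) (auto simp: G_def C_def)
  \<comment> \<open>the bound of the theorem is weaker by the factor \<open>1 - \<zeta>\<close>\<close>
  also have "?R \<le> ?R / (1 - \<zeta>)"
    using divide_left_mono[of "1 - \<zeta>" 1 ?R] f_lower[of 0] K \<delta> q \<beta> \<zeta> by (simp add: C_def)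
  moreover have "2 * K * C = (2 - q) * (L + q * \<rho>) * \<delta> powr (2 / (2 - q)) / \<rho> powr (q / (2 - q))"
    using \<rho> by (simp add: K_def C_def field_simps)
  ultimately show ?thesis
    by (simp add: Let_def G_def K_def f_def add_divide_distrib mult_ac)
qed

end
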